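(* If $\mathcal U\in\mathcal M_*$ and $\mathcal V\in\mathcal M_{\le\omega}$, then $\mathcal U\cdot\mathcal V:=\{(AC,D)\mid A\in\mathcal U,\ (C,D)\in\mathcal V\}$ belongs to $\mathcal M_{\le\omega}$ (i.e. is a closed subset of $\mathcal C$).
   Context: $\Sigma$ is a finite alphabet, $\Sigma^{\le\omega}=\Sigma^*\cup\Sigma^\omega$; concatenation $w\cdot u$ equals $wu$ if $w$ is finite and $w$ if $w$ is infinite, extended pointwise to languages. For $A\subseteq\Sigma^*$, $A^\omega$ is the set of all words $w_0w_1w_2\cdots$ with $w_i\in A$, and $CD^\omega$ means $C\cdot D^\omega$. Fix an extended Büchi automaton $\mathfrak A=(Q,\Sigma,\delta,q_0,F)$ (finite states, $\delta:Q\times\Sigma\to\mathcal P(Q)$, initial $q_0$, final $F$). For $w\in\Sigma^*$ write $p\overset{w}{\leadsto}q$ if $q$ is reachable from $p$ reading $w$, and $p\overset{w}{\leadsto}_F q$ if there are $q''\in F$, $w=uv$ with $p\overset{u}{\leadsto}q''\overset{v}{\leadsto}q$. For $w,u\in\Sigma^+$, $w\sim u$ iff for all $p,q$: $p\overset{w}{\leadsto}q\Leftrightarrow p\overset{u}{\leadsto}q$ and $p\overset{w}{\leadsto}_Fq\Leftrightarrow p\overset{u}{\leadsto}_Fq$. $\mathcal Q=\Sigma^+/{\sim}\uplus\{[\epsilon]\}$ with $[\epsilon]=\{\epsilon\}$; concatenation of classes is well defined (monoid with unit $[\epsilon]$). Let $\mathcal C=\{(C,D)\mid C,D\in\mathcal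 Q,\ CD=C,\ DD=D\}$. Define $\mathfrak f(V)=\{(C,D)\in\mathcal C\mid CD^\omega\cap V\neq\emptyset\}$ and $\mathfrak g(\mathcal V)=\bigcup_{(C,D)\in\mathcal V}CD^\omega$. $\mathcal V\subseteq\mathcal C$ is closed if $\mathfrak f(\mathfrak g(\mathcal V))=\mathcal V$, i.e. whenever $(C,D)\in\mathcal V$, $(U,V)\in\mathcal C$ and $UV^\omega\cap CD^\omega\ne\emptyset$ then $(U,V)\in\mathcal V$; closure $\mathfrak c(\mathcal V)=\bigcup_{n\ge1}(\mathfrak f\circ\mathfrak g)^n(\mathcal V)$. $\mathcal M_{\le\omega}=\{\mathfrak c(\mathfrak f(V))\mid V\subseteq\Sigma^{\le\omega}\}$ (equivalently the closed subsets of $\mathcal C$) and $\mathcal M_*=\mathcal P(\mathcal Q)$. *)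

theory Defs
  imports Main
begin

datatype 'a fiword = Fin "'a list" | Inf "nat \<Rightarrow> 'a"

fun wconc :: "'a fiword \<Rightarrow> 'a fiword \<Rightarrow> 'a fiword" where
  "wconc (Fin u) (Fin v) = Fin (u @ v)"
| "wconc (Fin u) (Inf f) = Inf (\<lambda>k. if k < length u then u ! k else f (k - length u))"
| "wconc (Inf f) _ = Inf f"

definition lang_conc :: "'a fiword set \<Rightarrow> 'a fiword set \<Rightarrow> 'a fiword set" where
  "lang_conc X Y = {wconc x y | x y. x \<in> X \<and> y \<in> Y}"

text \<open>Infinite concatenation w_0 w_1 w_2 ... of finite words.\<close>
definition pre :: "(nat \<Rightarrow> 'a list) \<Rightarrow> nat \<Rightarrow> 'a list" where
  "pre w n = concat (map w [0..<n])"

definition omega_concat :: "(nat \<Rightarrow> 'a list) \<Rightarrow> 'a fiword" where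
  "omega_concat w =
     (if \<exists>N. \<forall>i\<ge>N. w i = [] then Fin (pre w (LEAST N. \<forall>i\<ge>N. w i = []))
      else Inf (\<lambda>k. pre w (LEAST n. k < length (pre w n)) ! k))"

definition omega_pow :: "'a list set \<Rightarrow> 'a fiword set" where
  "omega_pow A = {omega_concat w | w. \<forall>i. w i \<in> A}"

definition CDomega :: "'a list set \<Rightarrow> 'a list set \<Rightarrow> 'a fiword set" where
  "CDomega C D = lang_conc (Fin ` C) (omega_pow D)"

fun reach :: "('q \<Rightarrow> 'a \<Rightarrow> 'q set) \<Rightarrow> 'q \<Rightarrow> 'a list \<Rightarrow> 'q \<Rightarrow> bool" where
  "reach \<delta> p [] q = (p = q)"
| "reach \<delta> p (a # w) q = (\<exists>p' \<in> \<delta> p a. reach \<delta> p' w q)"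

definition reachF :: "('q \<Rightarrow> 'a \<Rightarrow> 'q set) \<Rightarrow> 'q set \<Rightarrow> 'q \<Rightarrow> 'a list \<Rightarrow> 'q \<Rightarrow> bool" where
  "reachF \<delta> F p w q = (\<exists>q'' u v. q'' \<in> F \<and> w = u @ v \<and> reach \<delta> p u q'' \<and> reach \<delta> q'' v q)"

definition sim :: "('q \<Rightarrow> 'a \<Rightarrow> 'q set) \<Rightarrow> 'q set \<Rightarrow> 'a list \<Rightarrow> 'a list \<Rightarrow> bool" where
  "sim \<delta> F w u = (w \<noteq> [] \<and> u \<noteq> [] \<and>
     (\<forall>p q. (reach \<delta> p w q \<longleftrightarrow> reach \<delta> p u q) \<and> (reachF \<delta> F p w q \<longleftrightarrow> reachF \<delta> F p u q)))"

definition cls :: "('q \<Rightarrow> 'a \<Rightarrow> 'q set) \<Rightarrow> 'q set \<Rightarrow> 'a list \<Rightarrow> 'a list set" where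
  "cls \<delta> F w = (if w = [] then {[]} else {u. sim \<delta> F w u})"

text \<open>The monoid \<Q> = \<Sigma>^+/\<sim> \<uplus> {[\<epsilon>]}.\<close>
definition Qset :: "('q \<Rightarrow> 'a \<Rightarrow> 'q set) \<Rightarrow> 'q set \<Rightarrow> 'a list set set" where
  "Qset \<delta> F = cls \<delta> F ` UNIV"

definition cmul :: "('q \<Rightarrow> 'a \<Rightarrow> 'q set) \<Rightarrow> 'q set \<Rightarrow> 'a list set \<Rightarrow> 'a list set \<Rightarrow> 'a list set" where
  "cmul \<delta> F C D = cls \<delta> F ((SOME x. x \<in> C) @ (SOME y. y \<in> D))"

definition Cpairs :: "('q \<Rightarrow> 'a \<Rightarrow> 'q set) \<Rightarrow> 'q set \<Rightarrow> ('a list set \<times> 'a list set) set" where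
  "Cpairs \<delta> F = {(C, D). C \<in> Qset \<delta> F \<and> D \<in> Qset \<delta> F \<and> cmul \<delta> F C D = C \<and> cmul \<delta> F D D = D}"

definition fmap :: "('q \<Rightarrow> 'a \<Rightarrow> 'q set) \<Rightarrow> 'q set \<Rightarrow> 'a fiword set \<Rightarrow> ('a list set \<times> 'a list set) set" where
  "fmap \<delta> F V = {(C, D) \<in> Cpairs \<delta> F. CDomega C D \<inter> V \<noteq> {}}"

definition gmap :: "('a list set \<times> 'a list set) set \<Rightarrow> 'a fiword set" where
  "gmap \<V> = (\<Union>(C, D) \<in> \<V>. CDomega C D)"

text \<open>\<M>_{\<le>\<omega>}: the closed subsets of \<C>.\<close>
definition M_le_omega :: "('q \<Rightarrow> 'a \<Rightarrow> 'q set) \<Rightarrow> 'q set \<Rightarrow> ('a list set \<times> 'a list set) set set" where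
  "M_le_omega \<delta> F = {\<V>. \<V> \<subseteq> Cpairs \<delta> F \<and> fmap \<delta> F (gmap \<V>) = \<V>}"

definition M_star :: "('q \<Rightarrow> 'a \<Rightarrow> 'q set) \<Rightarrow> 'q set \<Rightarrow> 'a list set set set" where
  "M_star \<delta> F = Pow (Qset \<delta> F)"

definition Mprod :: "('q \<Rightarrow> 'a \<Rightarrow> 'q set) \<Rightarrow> 'q set \<Rightarrow> 'a list set set \<Rightarrow> ('a list set \<times> 'a list set) set
    \<Rightarrow> ('a list set \<times> 'a list set) set" where
  "Mprod \<delta> F \<U> \<V> = {(cmul \<delta> F A C, D) | A C D. A \<in> \<U> \<and> (C, D) \<in> \<V>}"

end

theory Submission imports Defs begin

(* Let (U,V) be a pair of C whose language U V^omega meets (A C) D^omega, where A is in \<U>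
   and (C,D) in \<V>; so u v_0 v_1 ... = e d_0 d_1 ... with u in U, v_i in V, e in AC, d_i in D.
   Cutting the left word after enough blocks of v gives e x = u v_0 ... v_(k-1) and
   d_0 d_1 ... = x v_k v_(k+1) ...  Hence, for c in C, the word c d_0 d_1 ... lies both in
   C D^omega and in C' V^omega with C' = [c x v_k]; (C',V) is a pair of C, so closedness of \<V>
   gives (C',V) in \<V>, and A C' = [e x v_k] = [u v_0 ... v_k] = U since U V = U. *)

section \<open>Reachability and the congruence \<sim>\<close>

lemma reach_append: "reach \<delta> p (w @ u) q \<longleftrightarrow> (\<exists>r. reach \<delta> p w r \<and> reach \<delta> r u q)"
  by (induction w arbitrary: p) auto

lemma reachF_append: "reachF \<delta> F p (w @ u) q \<longleftrightarrow>
   (\<exists>r. reachF \<delta> F p w r \<and> reach \<delta> r u q) \<or> (\<exists>r. reach \<delta> p w r \<and> reachF \<delta> F r u q)"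
proof
  assume "reachF \<delta> F p (w @ u) q"
  then obtain f x y where f: "f \<in> F" "w @ u = x @ y" "reach \<delta> p x f" "reach \<delta> f y q"
    unfolding reachF_def by blast
  from f(2) obtain t where "(x = w @ t \<and> u = t @ y) \<or> (w = x @ t \<and> y = t @ u)"
    by (auto simp: append_eq_append_conv2)
  then show "(\<exists>r. reachF \<delta> F p w r \<and> reach \<delta> r u q) \<or> (\<exists>r. reach \<delta> p w r \<and> reachF \<delta> F r u q)"
  proof
    assume split: "x = w @ t \<and> u = t @ y"
    then obtain r where "reach \<delta> p w r" "reach \<delta> r t f" using f(3) reach_append by metis
    then show ?thesis using split f unfolding reachF_def by blast
  next
    assume split: "w = x @ t \<and> y = t @ u"
    then obtain r where "reach \<delta> f t r" "reach \<delta> r u q" using f(4) reach_append by metis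
    then show ?thesis using split f unfolding reachF_def by blast
  qed
next
  assume "(\<exists>r. reachF \<delta> F p w r \<and> reach \<delta> r u q) \<or> (\<exists>r. reach \<delta> p w r \<and> reachF \<delta> F r u q)"
  then show "reachF \<delta> F p (w @ u) q"
  proof
    assume "\<exists>r. reachF \<delta> F p w r \<and> reach \<delta> r u q"
    then obtain r f x y where "f \<in> F" "w = x @ y" "reach \<delta> p x f" "reach \<delta> f (y @ u) q"
      unfolding reachF_def by (auto simp: reach_append)
    then show ?thesis unfolding reachF_def by (metis append.assoc)
  next
    assume "\<exists>r. reach \<delta> p w r \<and> reachF \<delta> F r u q"
    then obtain f x y where "f \<in> F" "u = x @ y" "reach \<delta> p (w @ x) f" "reach \<delta> f y q"
      unfolding reachF_def by (auto simp: reach_append)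
    then show ?thesis unfolding reachF_def by (metis append.assoc)
  qed
qed


definition profile :: "('q \<Rightarrow> 'a \<Rightarrow> 'q set) \<Rightarrow> 'q set \<Rightarrow> 'a list \<Rightarrow> ('q \<Rightarrow> 'q \<Rightarrow> bool) \<times> ('q \<Rightarrow> 'q \<Rightarrow> bool)"
  where "profile \<delta> F w = (\<lambda>p q. reach \<delta> p w q, \<lambda>p q. reachF \<delta> F p w q)"

lemma profile_append:
  "profile \<delta> F w = profile \<delta> F w' \<Longrightarrow> profile \<delta> F u = profile \<delta> F u' \<Longrightarrow>
   profile \<delta> F (w @ u) = profile \<delta> F (w' @ u')"
  unfolding profile_def by (simp add: fun_eq_iff reach_append reachF_append)

context
  fixes \<delta> :: "'q \<Rightarrow> 'a \<Rightarrow> 'q set" and F :: "'q set"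
begin

lemma cls_char: "cls \<delta> F w = {u. (u = [] \<longleftrightarrow> w = []) \<and> profile \<delta> F u = profile \<delta> F w}"
  unfolding cls_def sim_def profile_def by (auto simp: fun_eq_iff)

lemma cls_self: "w \<in> cls \<delta> F w"
  by (simp add: cls_char)

lemma mem_cls: "u \<in> cls \<delta> F w \<longleftrightarrow> cls \<delta> F u = cls \<delta> F w"
  unfolding cls_char by auto

lemma cls_nil_iff: "u \<in> cls \<delta> F w \<Longrightarrow> u = [] \<longleftrightarrow> w = []"
  by (simp add: cls_char)

lemma cls_eq: "cls \<delta> F u = cls \<delta> F w \<longleftrightarrow> (u = [] \<longleftrightarrow> w = []) \<and> profile \<delta> F u = profile \<delta> F w"
  using mem_cls[of u w] by (simp add: cls_char)

lemma cls_append: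
  "cls \<delta> F w = cls \<delta> F w' \<Longrightarrow> cls \<delta> F u = cls \<delta> F u' \<Longrightarrow> cls \<delta> F (w @ u) = cls \<delta> F (w' @ u')"
  unfolding cls_eq using profile_append by auto

lemma cmul_cls: "cmul \<delta> F (cls \<delta> F x) (cls \<delta> F y) = cls \<delta> F (x @ y)"
proof -
  have "(SOME x'. x' \<in> cls \<delta> F x) \<in> cls \<delta> F x" "(SOME y'. y' \<in> cls \<delta> F y) \<in> cls \<delta> F y"
    by (rule someI, rule cls_self)+
  then show ?thesis unfolding cmul_def by (metis cls_append mem_cls)
qed

lemma Qset_iff: "X \<in> Qset \<delta> F \<longleftrightarrow> (\<exists>x. X = cls \<delta> F x)"
  unfolding Qset_def by auto

lemma Cpairs_iff: "(C, D) \<in> Cpairs \<delta> F \<longleftrightarrow> (\<exists>c d. C = cls \<delta> F c \<and> D = cls \<delta> F d \<and>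
   cls \<delta> F (c @ d) = cls \<delta> F c \<and> cls \<delta> F (d @ d) = cls \<delta> F d)"
  unfolding Cpairs_def Qset_iff by (auto simp: cmul_cls; blast)

lemma Cpairs_cmul_left:
  assumes "A \<in> Qset \<delta> F" and "(C, D) \<in> Cpairs \<delta> F"
  shows "(cmul \<delta> F A C, D) \<in> Cpairs \<delta> F"
proof -
  obtain a where A: "A = cls \<delta> F a" using assms(1) unfolding Qset_iff by blast
  obtain c d where C: "C = cls \<delta> F c" and D: "D = cls \<delta> F d"
    and cd: "cls \<delta> F (c @ d) = cls \<delta> F c" and dd: "cls \<delta> F (d @ d) = cls \<delta> F d"
    using assms(2) unfolding Cpairs_iff by blast
  have "cls \<delta> F (a @ c @ d) = cls \<delta> F (a @ c)" using cls_append[OF refl cd] .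
  then show ?thesis unfolding Cpairs_iff A C D cmul_cls using dd
    by (intro exI[of _ "a @ c"] exI[of _ d]) simp
qed

lemma Cpairs_append_right:
  assumes "(U, V) \<in> Cpairs \<delta> F" and "v \<in> V"
  shows "(cls \<delta> F (w @ v), V) \<in> Cpairs \<delta> F"
proof -
  obtain v0 where V: "V = cls \<delta> F v0" and vv: "cls \<delta> F (v0 @ v0) = cls \<delta> F v0"
    using assms(1) unfolding Cpairs_iff by blast
  have "cls \<delta> F v = cls \<delta> F v0" using assms(2) V by (simp add: mem_cls)
  then have "cls \<delta> F (v @ v0) = cls \<delta> F v" using cls_append[of v v0 v0 v0] vv by simp
  then have "cls \<delta> F (w @ v @ v0) = cls \<delta> F (w @ v)" using cls_append[OF refl] by blast
  then show ?thesis unfolding Cpairs_iff V using vv by (intro exI[of _ "w @ v"] exI[of _ v0]) simp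
qed

lemma cls_append_pre:
  assumes "\<forall>i. cls \<delta> F (v i) = cls \<delta> F v0" and "cls \<delta> F (u @ v0) = cls \<delta> F u"
  shows "cls \<delta> F (u @ pre v n) = cls \<delta> F u"
proof (induction n)
  case (Suc n)
  have "cls \<delta> F (u @ pre v (Suc n)) = cls \<delta> F ((u @ pre v n) @ v n)" by (simp add: pre_def)
  also have "\<dots> = cls \<delta> F (u @ v0)" using cls_append[OF Suc assms(1)[rule_format, of n]] .
  finally show ?case using assms(2) by simp
qed (simp add: pre_def)

end

section \<open>Infinite concatenations\<close>

lemma pre_0 [simp]: "pre v 0 = []" by (simp add: pre_def)
lemma pre_Suc [simp]: "pre v (Suc n) = pre v n @ v n" by (simp add: pre_def)

lemma pre_add: "pre v (k + n) = pre v k @ pre (\<lambda>i. v (i + k)) n"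
  by (induction n) (auto simp: add.commute)

lemma length_pre: "\<forall>i. v i \<noteq> [] \<Longrightarrow> n \<le> length (pre v n)"
proof (induction n)
  case (Suc n)
  then have "n \<le> length (pre v n)" "0 < length (v n)" by auto
  then show ?case unfolding pre_Suc length_append by linarith
qed simp

text \<open>Prefixes \<open>pre v n\<close> are prefixes of each other, so their letters agree where defined.\<close>
lemma pre_nth: "m < length (pre v n) \<Longrightarrow> m < length (pre v n') \<Longrightarrow> pre v n ! m = pre v n' ! m"
proof (induction n n' rule: linorder_wlog)
  case (le n n')
  then show ?case using pre_add[of v n "n' - n"] by (simp add: nth_append)
qed (simp add: eq_commute)

lemma pre_all_nil: "\<forall>i. v i = [] \<Longrightarrow> pre v n = []"
  by (induction n) auto

lemma omega_concat_all_nil: "\<forall>i. v i = [] \<Longrightarrow> omega_concat v = Fin []"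
  unfolding omega_concat_def by (simp add: pre_all_nil)

lemma omega_concat_Inf:
  assumes ne: "\<forall>i. v i \<noteq> []" and g: "\<And>n m. m < length (pre v n) \<Longrightarrow> g m = pre v n ! m"
  shows "omega_concat v = Inf g"
proof -
  have "pre v (LEAST n. k < length (pre v n)) ! k = g k" for k
  proof -
    have "k < length (pre v (Suc k))" using length_pre[OF ne, of "Suc k"] by simp
    then have "k < length (pre v (LEAST n. k < length (pre v n)))" by (rule LeastI)
    then show ?thesis using g by simp
  qed
  moreover have "\<not> (\<exists>N. \<forall>i\<ge>N. v i = [])" using ne by blast
  ultimately show ?thesis unfolding omega_concat_def by auto
qed

definition omega_nth :: "(nat \<Rightarrow> 'a list) \<Rightarrow> nat \<Rightarrow> 'a" where
  "omega_nth v m = pre v (Suc m) ! m"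

lemma omega_nth_pre:
  assumes ne: "\<forall>i. v i \<noteq> []" and m: "m < length (pre v n)"
  shows "omega_nth v m = pre v n ! m"
  unfolding omega_nth_def using length_pre[OF ne, of "Suc m"] m by (intro pre_nth) auto

lemma wconc_assoc: "wconc (Fin a) (wconc (Fin b) W) = wconc (Fin (a @ b)) W"
  by (cases W) (auto simp: fun_eq_iff nth_append)

text \<open>Blocks that are all empty or all nonempty (as are the words of one class) can be
  split off: \<open>v\<^sub>0 v\<^sub>1 \<dots> = (v\<^sub>0 \<dots> v\<^sub>k\<^sub>-\<^sub>1) (v\<^sub>k v\<^sub>k\<^sub>+\<^sub>1 \<dots>)\<close>.\<close>
lemma omega_concat_shift:
  assumes "(\<forall>i. v i \<noteq> []) \<or> (\<forall>i. v i = [])"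
  shows "omega_concat v = wconc (Fin (pre v k)) (omega_concat (\<lambda>i. v (i + k)))"
  using assms
proof
  assume ne: "\<forall>i. v i \<noteq> []"
  let ?L = "length (pre v k)"
  have "omega_concat (\<lambda>i. v (i + k)) = Inf (\<lambda>j. omega_nth v (j + ?L))"
  proof (rule omega_concat_Inf)
    fix n m assume m: "m < length (pre (\<lambda>i. v (i + k)) n)"
    then have "omega_nth v (m + ?L) = pre v (k + n) ! (m + ?L)"
      by (intro omega_nth_pre[OF ne]) (simp add: pre_add)
    then show "omega_nth v (m + ?L) = pre (\<lambda>i. v (i + k)) n ! m"
      by (simp add: pre_add nth_append)
  qed (use ne in blast)
  moreover have "(\<lambda>m. if m < ?L then pre v k ! m else omega_nth v (m - ?L + ?L)) = omega_nth v"
    using omega_nth_pre[OF ne] by (auto simp: fun_eq_iff)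
  moreover have "omega_concat v = Inf (omega_nth v)"
    using omega_concat_Inf[OF ne omega_nth_pre[OF ne]] .
  ultimately show ?thesis by simp
next
  assume "\<forall>i. v i = []"
  then show ?thesis by (simp add: omega_concat_all_nil pre_all_nil)
qed

lemma wconc_cancel:
  assumes eq: "wconc (Fin P) W = wconc (Fin e) W2" and le: "length e \<le> length P"
  shows "e @ drop (length e) P = P \<and> W2 = wconc (Fin (drop (length e) P)) W"
proof (cases W)
  case (Fin w)
  then obtain w2 where W2: "W2 = Fin w2" using eq by (cases W2) auto
  then have "P @ w = e @ w2" using eq Fin by simp
  then show ?thesis using le Fin W2
    by (auto simp: append_eq_append_conv_if split: if_splits) (metis append_take_drop_id)
next
  case (Inf g)
  then obtain h where W2: "W2 = Inf h" using eq by (cases W2) auto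
  have letters: "(if m < length P then P ! m else g (m - length P)) =
                 (if m < length e then e ! m else h (m - length e))" for m
    using eq Inf W2 by (simp add: fun_eq_iff)
  have "take (length e) P = e"
  proof (rule nth_equalityI)
    fix i assume "i < length (take (length e) P)"
    then show "take (length e) P ! i = e ! i" using letters[of i] le by auto
  qed (use le in simp)
  then have prefix: "e @ drop (length e) P = P" by (metis append_take_drop_id)
  have "h j = (if j < length (drop (length e) P) then drop (length e) P ! j
               else g (j - length (drop (length e) P)))" for j
    using letters[of "j + length e"] le by (auto simp: add.commute split: if_splits)
  then show ?thesis using prefix Inf W2 by (simp add: fun_eq_iff)
qed

lemma omega_concat_resync:
  assumes eq: "wconc (Fin u) (omega_concat v) = wconc (Fin e) W2"
    and uniform: "(\<forall>i. v i \<noteq> []) \<or> (\<forall>i. v i = [])"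
  shows "\<exists>k x. e @ x = u @ pre v k \<and> W2 = wconc (Fin x) (omega_concat (\<lambda>i. v (i + k)))"
  using uniform
proof
  assume ne: "\<forall>i. v i \<noteq> []"
  let ?P = "u @ pre v (length e)"
  have "wconc (Fin ?P) (omega_concat (\<lambda>i. v (i + length e))) = wconc (Fin e) W2"
    using eq omega_concat_shift[OF uniform, of "length e"] by (simp add: wconc_assoc)
  moreover have "length e \<le> length ?P" using length_pre[OF ne, of "length e"] by simp
  ultimately show ?thesis by (blast dest: wconc_cancel)
next
  assume "\<forall>i. v i = []"
  then have nil: "omega_concat v = Fin []" by (rule omega_concat_all_nil)
  then obtain y where "W2 = Fin y" using eq by (cases W2) auto
  then show ?thesis using eq nil by (intro exI[of _ 0] exI[of _ y]) simp
qed

section \<open>The languages \<open>C D\<^sup>\<omega>\<close> and closed sets of pairs\<close>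

lemma CDomega_I: "c \<in> C \<Longrightarrow> \<forall>i. d i \<in> D \<Longrightarrow> wconc (Fin c) (omega_concat d) \<in> CDomega C D"
  unfolding CDomega_def lang_conc_def omega_pow_def by blast

lemma CDomega_E:
  "z \<in> CDomega C D \<Longrightarrow> \<exists>c d. c \<in> C \<and> (\<forall>i. d i \<in> D) \<and> z = wconc (Fin c) (omega_concat d)"
  unfolding CDomega_def lang_conc_def omega_pow_def by blast

text \<open>Every pair of \<open>\<C>\<close> has a nonempty language, e.g. \<open>c d d d \<dots>\<close>.\<close>
lemma CDomega_nonempty:
  assumes "(C, D) \<in> Cpairs \<delta> F"
  shows "CDomega C D \<noteq> {}"
proof -
  obtain c d where "C = cls \<delta> F c" "D = cls \<delta> F d" using assms unfolding Cpairs_iff by blast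
  then have "wconc (Fin c) (omega_concat (\<lambda>_. d)) \<in> CDomega C D"
    by (intro CDomega_I) (auto intro: cls_self)
  then show ?thesis by blast
qed

lemma M_le_omega_iff:
  "\<V> \<in> M_le_omega \<delta> F \<longleftrightarrow> \<V> \<subseteq> Cpairs \<delta> F \<and>
     (\<forall>C D U V. (C, D) \<in> \<V> \<longrightarrow> (U, V) \<in> Cpairs \<delta> F \<longrightarrow>
        CDomega U V \<inter> CDomega C D \<noteq> {} \<longrightarrow> (U, V) \<in> \<V>)"
proof -
  have "\<V> \<subseteq> fmap \<delta> F (gmap \<V>)" if sub: "\<V> \<subseteq> Cpairs \<delta> F"
  proof clarify
    fix C D assume CD: "(C, D) \<in> \<V>"
    then obtain z where "z \<in> CDomega C D" using sub CDomega_nonempty by blast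
    then show "(C, D) \<in> fmap \<delta> F (gmap \<V>)" using CD sub unfolding fmap_def gmap_def by blast
  qed
  moreover have "fmap \<delta> F (gmap \<V>) \<subseteq> \<V> \<longleftrightarrow>
     (\<forall>C D U V. (C, D) \<in> \<V> \<longrightarrow> (U, V) \<in> Cpairs \<delta> F \<longrightarrow>
        CDomega U V \<inter> CDomega C D \<noteq> {} \<longrightarrow> (U, V) \<in> \<V>)"
    unfolding fmap_def gmap_def by blast
  ultimately show ?thesis unfolding M_le_omega_def by blast
qed

section \<open>Products \<open>\<U> \<cdot> \<V>\<close>\<close>

lemma meets_cmul_left:
  assumes closed: "\<V> \<in> M_le_omega \<delta> F" and CD: "(C, D) \<in> \<V>" and A: "A \<in> Qset \<delta> F"
    and UV: "(U, V) \<in> Cpairs \<delta> F"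
    and z_UV: "z \<in> CDomega U V" and z_ACD: "z \<in> CDomega (cmul \<delta> F A C) D"
  shows "\<exists>C'. (C', V) \<in> \<V> \<and> U = cmul \<delta> F A C'"
proof -
  have CD_pair: "(C, D) \<in> Cpairs \<delta> F" and
    closed_at_CD: "\<And>C' V'. (C', V') \<in> Cpairs \<delta> F \<Longrightarrow> CDomega C' V' \<inter> CDomega C D \<noteq> {} \<Longrightarrow> (C', V') \<in> \<V>"
    using closed CD unfolding M_le_omega_iff by blast+
  obtain a where A_def: "A = cls \<delta> F a" using A unfolding Qset_iff by blast
  obtain c where C_def: "C = cls \<delta> F c" using CD_pair unfolding Cpairs_iff by blast
  obtain u0 v0 where U_def: "U = cls \<delta> F u0" and V_def: "V = cls \<delta> F v0"
    and u0v0: "cls \<delta> F (u0 @ v0) = cls \<delta> F u0"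
    using UV unfolding Cpairs_iff by blast
  obtain u v where u: "u \<in> U" and v: "\<forall>i. v i \<in> V" and z_u: "z = wconc (Fin u) (omega_concat v)"
    using CDomega_E[OF z_UV] by blast
  obtain e d where e: "e \<in> cmul \<delta> F A C" and d: "\<forall>i. d i \<in> D"
    and z_e: "z = wconc (Fin e) (omega_concat d)"
    using CDomega_E[OF z_ACD] by blast
  have v_cls: "\<forall>i. cls \<delta> F (v i) = cls \<delta> F v0" using v by (simp add: V_def mem_cls)
  have uniform: "(\<forall>i. v i \<noteq> []) \<or> (\<forall>i. v i = [])"
    using v cls_nil_iff unfolding V_def by blast
  obtain k x where ex: "e @ x = u @ pre v k"
    and d_tail: "omega_concat d = wconc (Fin x) (omega_concat (\<lambda>i. v (i + k)))"
    using omega_concat_resync[OF _ uniform, of u e "omega_concat d"] z_u z_e by blast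
  txt \<open>The word \<open>c d\<^sub>0 d\<^sub>1 \<dots> = (c x v\<^sub>k) v\<^sub>k\<^sub>+\<^sub>1 \<dots>\<close> lies in \<open>C D\<^sup>\<omega>\<close> and in \<open>C' V\<^sup>\<omega>\<close>.\<close>
  define C' where "C' = cls \<delta> F (c @ x @ v k)"
  have "omega_concat (\<lambda>i. v (i + k)) = wconc (Fin (v k)) (omega_concat (\<lambda>i. v (i + Suc k)))"
  proof -
    have "(\<forall>i. v (i + k) \<noteq> []) \<or> (\<forall>i. v (i + k) = [])" using uniform by blast
    from omega_concat_shift[OF this, of 1] show ?thesis by simp
  qed
  then have w: "wconc (Fin c) (omega_concat d) = wconc (Fin (c @ x @ v k)) (omega_concat (\<lambda>i. v (i + Suc k)))"
    using d_tail by (simp add: wconc_assoc)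
  have "wconc (Fin c) (omega_concat d) \<in> CDomega C D"
    using C_def d by (intro CDomega_I) (auto intro: cls_self)
  moreover have "wconc (Fin c) (omega_concat d) \<in> CDomega C' V"
    unfolding w C'_def using v by (intro CDomega_I) (auto intro: cls_self)
  moreover have "(C', V) \<in> Cpairs \<delta> F"
    using Cpairs_append_right[OF UV, of "v k" "c @ x"] v unfolding C'_def by simp
  ultimately have C'V: "(C', V) \<in> \<V>" using closed_at_CD by blast
  have e_cls: "cls \<delta> F e = cls \<delta> F (a @ c)" using e by (simp add: A_def C_def cmul_cls mem_cls)
  have u_cls: "cls \<delta> F u = cls \<delta> F u0" using u by (simp add: U_def mem_cls)
  have "cmul \<delta> F A C' = cls \<delta> F ((a @ c) @ (x @ v k))" by (simp add: A_def C'_def cmul_cls)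
  also have "\<dots> = cls \<delta> F (e @ (x @ v k))" using cls_append[OF e_cls refl] by simp
  also have "\<dots> = cls \<delta> F (u @ pre v (Suc k))" using ex by (metis append.assoc pre_Suc)
  also have "\<dots> = cls \<delta> F u"
  proof (rule cls_append_pre[OF v_cls])
    show "cls \<delta> F (u @ v0) = cls \<delta> F u" using cls_append[OF u_cls refl] u0v0 u_cls by simp
  qed
  also have "\<dots> = U" using u_cls U_def by simp
  finally show ?thesis using C'V by blast
qed

theorem lemma10:
  fixes \<delta> :: "'q::finite \<Rightarrow> 'a::finite \<Rightarrow> 'q set"
    and F :: "'q set"
    and \<U> :: "'a list set set" and \<V> :: "('a list set \<times> 'a list set) set"
  assumes "\<U> \<in> M_star \<delta> F" and "\<V> \<in> M_le_omega \<delta> F"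
  shows "Mprod \<delta> F \<U> \<V> \<in> M_le_omega \<delta> F"
proof -
  have U_classes: "\<U> \<subseteq> Qset \<delta> F" using assms(1) by (simp add: M_star_def)
  have V_pairs: "\<V> \<subseteq> Cpairs \<delta> F" using assms(2) by (simp add: M_le_omega_iff)
  have "Mprod \<delta> F \<U> \<V> \<subseteq> Cpairs \<delta> F"
    using U_classes V_pairs Cpairs_cmul_left unfolding Mprod_def by blast
  moreover have "(U, V) \<in> Mprod \<delta> F \<U> \<V>"
    if XD: "(X, D) \<in> Mprod \<delta> F \<U> \<V>" and UV: "(U, V) \<in> Cpairs \<delta> F"
      and meet: "CDomega U V \<inter> CDomega X D \<noteq> {}"
    for X D U V
  proof -
    obtain A C where X: "X = cmul \<delta> F A C" and A: "A \<in> \<U>" and CD: "(C, D) \<in> \<V>"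
      using XD unfolding Mprod_def by blast
    obtain C' where "(C', V) \<in> \<V>" "U = cmul \<delta> F A C'"
      using meets_cmul_left[OF assms(2) CD _ UV] A U_classes meet X by blast
    then show ?thesis using A unfolding Mprod_def by blast
  qed
  ultimately show ?thesis unfolding M_le_omega_iff by blast
qed

end
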